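(* Let $\{\mathcal N,\gamma,\boldsymbol\ell,\ell^{(2)}\}$ be null metric hypersurface data and $S$ an $(\mathfrak n-1)$-dimensional embedded submanifold of $\mathcal N$ (embedding $\psi$) everywhere transverse to $n$. For $X,Y\in\Gamma(TS)$ write uniquely ${\stackrel{\circ}{\nabla}}_XY=\nabla^S_XY+\Omega(X,Y)n$ with $\nabla^S_XY$ tangent to $S$. Let $\nabla^h$ be the Levi-Civita connection of $h=\psi^\star\gamma$. Then for all $X,Y\in\Gamma(TS)$, $$\nabla^h_XY=\nabla^S_XY-\mathbf U_\parallel(X,Y)\,\ell^\sharp_\parallel,\qquad {\stackrel{\circ}{\nabla}}_XY=\nabla^h_XY+\mathbf U_\parallel(X,Y)\,\ell^\sharp_\parallel+\Omega(X,Y)n,$$ and $$\Omega(X,Y)=\tfrac12\big((\nabla^h_X\boldsymbol\ell_\parallel)(Y)+(\nabla^h_Y\boldsymbol\ell_\parallel)(X)\big)+(\ell^{(2)}-\ell^{(2)}_\parallel)\mathbf U_\parallel(X,Y).$$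
   Context: Metric hypersurface data $\{\mathcal N,\gamma,\boldsymbol\ell,\ell^{(2)}\}$: $\mathcal N$ smooth $\mathfrak n$-manifold, $\gamma$ symmetric $2$-covariant, $\boldsymbol\ell$ a one-form, $\ell^{(2)}$ a function, such that $\boldsymbol{\mathcal A}|_p((W,a),(Z,b))=\gamma(W,Z)+a\boldsymbol\ell(Z)+b\boldsymbol\ell(W)+ab\ell^{(2)}$ is non-degenerate; its inverse $\mathcal A((\boldsymbol\alpha,a),(\boldsymbol\beta,b))=P(\boldsymbol\alpha,\boldsymbol\beta)+a\,n(\boldsymbol\beta)+b\,n(\boldsymbol\alpha)+ab\,n^{(2)}$ defines $P,n,n^{(2)}$. Null: $n^{(2)}=0$ (then $\gamma(n,\cdot)=0$, $\boldsymbol\ell(n)=1$). $\mathbf U=\frac12\pounds_n\gamma$. ${\stackrel{\circ}{\nabla}}$ is the unique torsion-free connection with $({\stackrel{\circ}{\nabla}}_X\gamma)(Z,W)=-\mathbf U(X,Z)\boldsymbol\ell(W)-\mathbf U(X,W)\boldsymbol\ell(Z)$, $({\stackrel{\circ}{\nabla}}_X\boldsymbol\ell)(Z)+({\stackrel{\circ}{\nabla}}_Z\boldsymbol\ell)(X)=-2\ell^{(2)}\mathbf U(X,Z)$. On $S$ (vectors identified with push-forwards): $h=\psi^\star\gamma$ is non-degenerate, $\boldsymbol\ell_\parallel=\psi^\star\boldsymbol\ell$, $\ell^\sharp_\parallel=h^\sharp(\boldsymbol\ell_\parallel,\cdot)$, $\ell^{(2)}_\parallel=h^\sharp(\boldsymbol\ell_\parallel,\boldsymbol\ell_\parallel)$,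 $\mathbf U_\parallel=\psi^\star\mathbf U$. *)

theory Defs
  imports "HOL-Analysis.Analysis"
begin

text \<open>The hypersurface N is (a chart domain) an open
set U of real^'n, tensors are given by components: gamma as a matrix field, the one-form
ell as a vector field (ell(W) = l p \<bullet> W), ell2 a function. S is the image of an
open set V of real^'m under psi. Connections are given by their Christoffel maps:
nabla_X Y = DY(X) + Gamma(X,Y).\<close>

definition dir :: "('a::real_normed_vector \<Rightarrow> 'b::real_normed_vector) \<Rightarrow> 'a \<Rightarrow> 'a \<Rightarrow> 'b" where
  "dir f p v = frechet_derivative f (at p) v"

definition bil :: "real^'n^'n \<Rightarrow> real^'n \<Rightarrow> real^'n \<Rightarrow> real" where
  "bil M a b = a \<bullet> (M *v b)"

definition calA :: "real^'n^'n \<Rightarrow> real^'n \<Rightarrow> real \<Rightarrow> ((real^'n) \<times> real) \<Rightarrow> ((real^'n) \<times> real) \<Rightarrow> real" where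
  "calA g l l2 u v = bil g (fst u) (fst v) + snd u * (l \<bullet> fst v) + snd v * (l \<bullet> fst u)
      + snd u * snd v * l2"

definition nondeg_A :: "real^'n^'n \<Rightarrow> real^'n \<Rightarrow> real \<Rightarrow> bool" where
  "nondeg_A g l l2 \<longleftrightarrow> (\<forall>u. (\<forall>v. calA g l l2 u v = 0) \<longrightarrow> u = 0)"

text \<open>(n, n2): the inverse form calA^{-1} evaluated on the covector (0,1), i.e. the unique
(W,a) with calA((W,a),(Z,b)) = b for all (Z,b); then calA^{-1}((0,1),(beta,b)) = beta(n) + b n2.\<close>
definition nvec :: "real^'n^'n \<Rightarrow> real^'n \<Rightarrow> real \<Rightarrow> (real^'n) \<times> real" where
  "nvec g l l2 = (THE u. \<forall>v. calA g l l2 u v = snd v)"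

definition nfield :: "(real^'n \<Rightarrow> real^'n^'n) \<Rightarrow> (real^'n \<Rightarrow> real^'n) \<Rightarrow> (real^'n \<Rightarrow> real)
    \<Rightarrow> real^'n \<Rightarrow> real^'n" where
  "nfield g l l2 p = fst (nvec (g p) (l p) (l2 p))"

definition n2field :: "(real^'n \<Rightarrow> real^'n^'n) \<Rightarrow> (real^'n \<Rightarrow> real^'n) \<Rightarrow> (real^'n \<Rightarrow> real)
    \<Rightarrow> real^'n \<Rightarrow> real" where
  "n2field g l l2 p = snd (nvec (g p) (l p) (l2 p))"

definition null_mhd :: "(real^'n) set \<Rightarrow> (real^'n \<Rightarrow> real^'n^'n) \<Rightarrow> (real^'n \<Rightarrow> real^'n)
    \<Rightarrow> (real^'n \<Rightarrow> real) \<Rightarrow> bool" where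
  "null_mhd U g l l2 \<longleftrightarrow> open U \<and>
     (\<forall>p\<in>U. transpose (g p) = g p \<and> nondeg_A (g p) (l p) (l2 p) \<and> n2field g l l2 p = 0
        \<and> g differentiable (at p) \<and> l differentiable (at p) \<and> l2 differentiable (at p))"

text \<open>U = 1/2 Lie_n gamma, evaluated on vectors a b (extended as constant coordinate fields).\<close>
definition Ufield :: "(real^'n \<Rightarrow> real^'n^'n) \<Rightarrow> (real^'n \<Rightarrow> real^'n) \<Rightarrow> (real^'n \<Rightarrow> real)
    \<Rightarrow> real^'n \<Rightarrow> real^'n \<Rightarrow> real^'n \<Rightarrow> real" where
  "Ufield g l l2 p a b = (1/2) * (dir (\<lambda>q. bil (g q) a b) p (nfield g l l2 p)
      + bil (g p) (dir (nfield g l l2) p a) b + bil (g p) a (dir (nfield g l l2) p b))"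

definition is_nabla_circ :: "(real^'n) set \<Rightarrow> (real^'n \<Rightarrow> real^'n^'n) \<Rightarrow> (real^'n \<Rightarrow> real^'n)
    \<Rightarrow> (real^'n \<Rightarrow> real) \<Rightarrow> (real^'n \<Rightarrow> real^'n \<Rightarrow> real^'n \<Rightarrow> real^'n) \<Rightarrow> bool" where
  "is_nabla_circ U g l l2 Gam \<longleftrightarrow> (\<forall>p\<in>U.
     bounded_bilinear (Gam p) \<and> (\<forall>X Z. Gam p X Z = Gam p Z X) \<and>
     (\<forall>X Z W. dir (\<lambda>q. bil (g q) Z W) p X - bil (g p) (Gam p X Z) W - bil (g p) Z (Gam p X W)
        = - Ufield g l l2 p X Z * (l p \<bullet> W) - Ufield g l l2 p X W * (l p \<bullet> Z)) \<and>
     (\<forall>X Z. (dir (\<lambda>q. l q \<bullet> Z) p X - l p \<bullet> Gam p X Z) + (dir (\<lambda>q. l q \<bullet> X) p Z - l p \<bullet> Gam p Z X)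
        = - 2 * l2 p * Ufield g l l2 p X Z))"

definition transverse_embedding :: "(real^'n) set \<Rightarrow> (real^'n \<Rightarrow> real^'n^'n) \<Rightarrow> (real^'n \<Rightarrow> real^'n)
    \<Rightarrow> (real^'n \<Rightarrow> real) \<Rightarrow> (real^'m) set \<Rightarrow> (real^'m \<Rightarrow> real^'n) \<Rightarrow> bool" where
  "transverse_embedding U g l l2 V psi \<longleftrightarrow> open V \<and> psi ` V \<subseteq> U \<and> inj_on psi V \<and>
     continuous_on (psi ` V) (inv_into V psi) \<and>
     (\<forall>q\<in>V. psi differentiable (at q) \<and> (\<forall>a. (\<lambda>r. dir psi r a) differentiable (at q)) \<and>
        inj (dir psi q) \<and>
        (\<forall>w. \<exists>a c. w = dir psi q a + c *\<^sub>R nfield g l l2 (psi q)))"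

definition hS :: "(real^'n \<Rightarrow> real^'n^'n) \<Rightarrow> (real^'m \<Rightarrow> real^'n) \<Rightarrow> real^'m \<Rightarrow> real^'m \<Rightarrow> real^'m \<Rightarrow> real" where
  "hS g psi q a b = bil (g (psi q)) (dir psi q a) (dir psi q b)"

definition is_levi_civita :: "(real^'m) set \<Rightarrow> (real^'m \<Rightarrow> real^'m \<Rightarrow> real^'m \<Rightarrow> real) \<Rightarrow>
    (real^'m \<Rightarrow> real^'m \<Rightarrow> real^'m \<Rightarrow> real^'m) \<Rightarrow> bool" where
  "is_levi_civita V h Gh \<longleftrightarrow> (\<forall>q\<in>V. bounded_bilinear (Gh q) \<and> (\<forall>a b. Gh q a b = Gh q b a) \<and>
     (\<forall>a b c. dir (\<lambda>r. h r b c) q a - h q (Gh q a b) c - h q b (Gh q a c) = 0))"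

definition lpar :: "(real^'n \<Rightarrow> real^'n) \<Rightarrow> (real^'m \<Rightarrow> real^'n) \<Rightarrow> real^'m \<Rightarrow> real^'m \<Rightarrow> real" where
  "lpar l psi q a = l (psi q) \<bullet> dir psi q a"

definition lsharp :: "(real^'n \<Rightarrow> real^'n^'n) \<Rightarrow> (real^'n \<Rightarrow> real^'n) \<Rightarrow> (real^'m \<Rightarrow> real^'n)
    \<Rightarrow> real^'m \<Rightarrow> real^'m" where
  "lsharp g l psi q = (THE v. \<forall>c. hS g psi q v c = lpar l psi q c)"

definition l2par :: "(real^'n \<Rightarrow> real^'n^'n) \<Rightarrow> (real^'n \<Rightarrow> real^'n) \<Rightarrow> (real^'m \<Rightarrow> real^'n)
    \<Rightarrow> real^'m \<Rightarrow> real" where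
  "l2par g l psi q = lpar l psi q (lsharp g l psi q)"

definition Upar :: "(real^'n \<Rightarrow> real^'n^'n) \<Rightarrow> (real^'n \<Rightarrow> real^'n) \<Rightarrow> (real^'n \<Rightarrow> real)
    \<Rightarrow> (real^'m \<Rightarrow> real^'n) \<Rightarrow> real^'m \<Rightarrow> real^'m \<Rightarrow> real^'m \<Rightarrow> real" where
  "Upar g l l2 psi q a b = Ufield g l l2 (psi q) (dir psi q a) (dir psi q b)"

definition nablaN :: "(real^'n \<Rightarrow> real^'n \<Rightarrow> real^'n \<Rightarrow> real^'n) \<Rightarrow> (real^'m \<Rightarrow> real^'n)
    \<Rightarrow> (real^'m \<Rightarrow> real^'m) \<Rightarrow> (real^'m \<Rightarrow> real^'m) \<Rightarrow> real^'m \<Rightarrow> real^'n" where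
  "nablaN Gam psi X Y q = dir (\<lambda>r. dir psi r (Y r)) q (X q)
      + Gam (psi q) (dir psi q (X q)) (dir psi q (Y q))"

definition decomp :: "(real^'n \<Rightarrow> real^'n^'n) \<Rightarrow> (real^'n \<Rightarrow> real^'n) \<Rightarrow> (real^'n \<Rightarrow> real)
    \<Rightarrow> (real^'n \<Rightarrow> real^'n \<Rightarrow> real^'n \<Rightarrow> real^'n) \<Rightarrow> (real^'m \<Rightarrow> real^'n)
    \<Rightarrow> (real^'m \<Rightarrow> real^'m) \<Rightarrow> (real^'m \<Rightarrow> real^'m) \<Rightarrow> real^'m \<Rightarrow> (real^'m) \<times> real" where
  "decomp g l l2 Gam psi X Y q = (THE vw. nablaN Gam psi X Y q
      = dir psi q (fst vw) + snd vw *\<^sub>R nfield g l l2 (psi q))"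

definition nablaS where "nablaS g l l2 Gam psi X Y q = fst (decomp g l l2 Gam psi X Y q)"
definition Omega where "Omega g l l2 Gam psi X Y q = snd (decomp g l l2 Gam psi X Y q)"

definition nablah :: "(real^'m \<Rightarrow> real^'m \<Rightarrow> real^'m \<Rightarrow> real^'m) \<Rightarrow> (real^'m \<Rightarrow> real^'m)
    \<Rightarrow> (real^'m \<Rightarrow> real^'m) \<Rightarrow> real^'m \<Rightarrow> real^'m" where
  "nablah Gh X Y q = dir Y q (X q) + Gh q (X q) (Y q)"

definition cov_lpar :: "(real^'m \<Rightarrow> real^'m \<Rightarrow> real^'m \<Rightarrow> real^'m) \<Rightarrow> (real^'n \<Rightarrow> real^'n)
    \<Rightarrow> (real^'m \<Rightarrow> real^'n) \<Rightarrow> real^'m \<Rightarrow> real^'m \<Rightarrow> real^'m \<Rightarrow> real" where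
  "cov_lpar Gh l psi q a b = dir (\<lambda>r. lpar l psi r b) q a - lpar l psi q (Gh q a b)"

end

theory Submission
  imports Defs
begin

(* Everything is evaluated at q on constant coordinate fields a, b.  The connection
   nabla-circ applied to the push-forwards is K(a,b) = D^2 psi(a,b) + Gam(P a, P b), P = D psi(q),
   and its splitting along T_pS + <n> gives the Christoffel map GamS of nabla^S and Omega.
   Since gamma(n, .) = 0, pairing K with P c under gamma sees only GamS, and the first defining
   identity of nabla-circ then says that GamH = GamS - U_par ell^sharp is symmetric and
   h-compatible.  h is nondegenerate because the radical of gamma is spanned by n, which is
   transverse to S; so the Koszul uniqueness argument gives nabla^h = GamH.  Contracting K
   with ell (ell(n) = 1) and symmetrising with the second defining identity yields Omega. *)

lemma dir_eq_frechet_derivative: "dir f p = frechet_derivative f (at p)"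
  by (rule ext) (simp add: dir_def)

lemma has_derivative_dir: "f differentiable (at x) \<Longrightarrow> (f has_derivative dir f x) (at x)"
  by (simp add: dir_eq_frechet_derivative frechet_derivative_works)

lemma dir_eqI: "(f has_derivative f') (at x) \<Longrightarrow> dir f x = f'"
  by (metis dir_eq_frechet_derivative frechet_derivative_at)

lemma dir_cong_open:
  assumes "open S" "x \<in> S" "\<And>y. y \<in> S \<Longrightarrow> f y = g y"
  shows "dir f x = dir g x"
proof -
  have "(f has_derivative f') (at x) = (g has_derivative f') (at x)" for f'
    using assms has_derivative_transform_within_open[of f _ x UNIV S g]
      has_derivative_transform_within_open[of g _ x UNIV S f] by metis
  then show ?thesis unfolding dir_def frechet_derivative_def by simp
qed

definition mixed_difference :: "('a::real_vector \<Rightarrow> 'b::real_vector) \<Rightarrow> 'a \<Rightarrow> 'a \<Rightarrow> 'a \<Rightarrow> real \<Rightarrow> 'b" where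
  "mixed_difference f q a b t = f (q + t *\<^sub>R a + t *\<^sub>R b) - f (q + t *\<^sub>R a) - f (q + t *\<^sub>R b) + f q"

lemma mixed_difference_commute: "mixed_difference f q a b = mixed_difference f q b a"
  by (rule ext) (simp add: mixed_difference_def algebra_simps)

lemma mixed_difference_bound:
  fixes f :: "'a::real_normed_vector \<Rightarrow> 'b::real_inner"
  assumes t: "0 < t"
    and df: "\<And>x. x \<in> {q + s *\<^sub>R a + t *\<^sub>R b | s. s \<in> {0..t}} \<union> {q + s *\<^sub>R a | s. s \<in> {0..t}}
               \<Longrightarrow> (f has_derivative f' x) (at x)"
    and B: "\<And>s. s \<in> {0..t} \<Longrightarrow> norm (f' (q + s *\<^sub>R a + t *\<^sub>R b) a - f' (q + s *\<^sub>R a) a - t *\<^sub>R H) \<le> B"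
  shows "norm (mixed_difference f q a b t - (t * t) *\<^sub>R H) \<le> t * B"
proof -
  define \<phi> where "\<phi> s = f (q + s *\<^sub>R a + t *\<^sub>R b) - f (q + s *\<^sub>R a) - s *\<^sub>R (t *\<^sub>R H)" for s
  define \<phi>' where "\<phi>' s h = h *\<^sub>R (f' (q + s *\<^sub>R a + t *\<^sub>R b) a - f' (q + s *\<^sub>R a) a - t *\<^sub>R H)" for s h
  have der: "(\<phi> has_derivative \<phi>' s) (at s)" if s: "s \<in> {0..t}" for s
  proof -
    have d1: "(f has_derivative f' (q + s *\<^sub>R a + t *\<^sub>R b)) (at (q + s *\<^sub>R a + t *\<^sub>R b))"
      and d2: "(f has_derivative f' (q + s *\<^sub>R a)) (at (q + s *\<^sub>R a))"
      using df s by blast+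
    have "((\<lambda>s. q + s *\<^sub>R a + t *\<^sub>R b) has_derivative (\<lambda>h. h *\<^sub>R a)) (at s)"
      "((\<lambda>s. q + s *\<^sub>R a) has_derivative (\<lambda>h. h *\<^sub>R a)) (at s)"
      by (auto intro!: derivative_eq_intros)
    from has_derivative_compose[OF this(1) d1] has_derivative_compose[OF this(2) d2]
    have "(\<phi> has_derivative (\<lambda>h. f' (q + s *\<^sub>R a + t *\<^sub>R b) (h *\<^sub>R a) - f' (q + s *\<^sub>R a) (h *\<^sub>R a)
        - h *\<^sub>R (t *\<^sub>R H))) (at s)"
      unfolding \<phi>_def by (intro has_derivative_diff has_derivative_scaleR_left has_derivative_ident)
    then show ?thesis
      unfolding \<phi>'_def
      using linear_scale[OF has_derivative_linear[OF d1]] linear_scale[OF has_derivative_linear[OF d2]]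
      by (simp add: scaleR_diff_right)
  qed
  have cont: "continuous_on {0..t} \<phi>"
    using der by (intro continuous_at_imp_continuous_on ballI) (auto intro: has_derivative_continuous)
  obtain s where s: "s \<in> {0<..<t}" and mv: "norm (\<phi> t - \<phi> 0) \<le> norm (\<phi>' s (t - 0))"
    using mvt_general[OF _ cont, of \<phi>'] t der by auto
  have "norm (\<phi>' s (t - 0)) \<le> t * B"
    using B[of s] s t by (simp add: \<phi>'_def mult_left_mono)
  moreover have "\<phi> t - \<phi> 0 = mixed_difference f q a b t - (t * t) *\<^sub>R H"
    by (simp add: \<phi>_def mixed_difference_def algebra_simps)
  ultimately show ?thesis using mv by simp
qed

lemma scaled_segment_norm_le:
  assumes "s \<in> {0..t}"
  shows "norm (s *\<^sub>R a + t *\<^sub>R b) \<le> t * (norm a + norm b)" and "norm (s *\<^sub>R a) \<le> t * (norm a + norm b)"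
proof -
  have "s * norm a \<le> t * norm a" using assms by (intro mult_right_mono) auto
  moreover have "norm (s *\<^sub>R a + t *\<^sub>R b) \<le> s * norm a + t * norm b"
    using norm_triangle_ineq[of "s *\<^sub>R a" "t *\<^sub>R b"] assms by simp
  moreover have "0 \<le> t * norm b" "norm (s *\<^sub>R a) = s * norm a" using assms by auto
  ultimately show "norm (s *\<^sub>R a + t *\<^sub>R b) \<le> t * (norm a + norm b)" "norm (s *\<^sub>R a) \<le> t * (norm a + norm b)"
    unfolding distrib_left by linarith+
qed

lemma linearization_difference_le:
  assumes "linear H"
    and "\<And>y. y \<in> {y1, y2} \<Longrightarrow> norm (\<phi> y - \<phi> q - H (y - q)) \<le> e * norm (y - q)"
  shows "norm (\<phi> y1 - \<phi> y2 - H (y1 - y2)) \<le> e * (norm (y1 - q) + norm (y2 - q))"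
proof -
  have "\<phi> y1 - \<phi> y2 - H (y1 - y2) = (\<phi> y1 - \<phi> q - H (y1 - q)) - (\<phi> y2 - \<phi> q - H (y2 - q))"
    using linear_diff[OF assms(1), of "y1 - q" "y2 - q"] by (simp add: algebra_simps)
  also have "norm \<dots> \<le> norm (\<phi> y1 - \<phi> q - H (y1 - q)) + norm (\<phi> y2 - \<phi> q - H (y2 - q))"
    by (rule norm_triangle_ineq4)
  also have "\<dots> \<le> e * (norm (y1 - q) + norm (y2 - q))"
    using assms(2)[of y1] assms(2)[of y2] by (simp add: distrib_left)
  finally show ?thesis .
qed

lemma mixed_difference_quotient_tendsto:
  fixes f :: "'a::real_normed_vector \<Rightarrow> 'b::real_inner"
  assumes V: "open V" "q \<in> V" and df: "\<And>r. r \<in> V \<Longrightarrow> (f has_derivative f' r) (at r)"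
    and dfa: "((\<lambda>r. f' r a) has_derivative Ha) (at q)"
  shows "((\<lambda>t. (1 / (t * t)) *\<^sub>R mixed_difference f q a b t) \<longlongrightarrow> Ha b) (at_right 0)"
proof (rule tendstoI)
  fix e :: real assume e: "e > 0"
  define C where "C = norm a + norm b + 1"
  have C: "C > 0" unfolding C_def by (simp add: add_nonneg_pos)
  define e' where "e' = e / (4 * C)"
  have e': "e' > 0" using e C by (simp add: e'_def)
  obtain d1 where d1: "d1 > 0"
    and lin: "\<And>y. norm (y - q) < d1 \<Longrightarrow> norm (f' y a - f' q a - Ha (y - q)) \<le> e' * norm (y - q)"
    using dfa e' unfolding has_derivative_at_alt by blast
  obtain d2 where d2: "d2 > 0" "ball q d2 \<subseteq> V"
    using V open_contains_ball by blast
  have "linear Ha" using dfa has_derivative_linear by blast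
  show "\<forall>\<^sub>F t in at_right 0. dist ((1 / (t * t)) *\<^sub>R mixed_difference f q a b t) (Ha b) < e"
    unfolding eventually_at_right_field
  proof (intro exI[of _ "min d1 d2 / C"] conjI allI impI)
    show "0 < min d1 d2 / C" using d1 d2 C by simp
    fix t :: real assume t: "0 < t" "t < min d1 d2 / C"
    then have tC: "t * C < min d1 d2" using C by (simp add: pos_less_divide_eq)
    have near: "norm (x - q) \<le> t * C" "x \<in> V" "norm (f' x a - f' q a - Ha (x - q)) \<le> e' * norm (x - q)"
      if "x \<in> {q + s *\<^sub>R a + t *\<^sub>R b | s. s \<in> {0..t}} \<union> {q + s *\<^sub>R a | s. s \<in> {0..t}}" for x
    proof -
      from that obtain s where s: "s \<in> {0..t}" and "x - q = s *\<^sub>R a + t *\<^sub>R b \<or> x - q = s *\<^sub>R a"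
        by auto
      then have "norm (x - q) \<le> t * (norm a + norm b)" using scaled_segment_norm_le[OF s] by auto
      also have "\<dots> \<le> t * C" using t unfolding C_def by simp
      finally show xq: "norm (x - q) \<le> t * C" .
      then show "x \<in> V" using tC d2 by (auto simp: dist_norm norm_minus_commute)
      show "norm (f' x a - f' q a - Ha (x - q)) \<le> e' * norm (x - q)"
        using lin xq tC by simp
    qed
    have "norm (mixed_difference f q a b t - (t * t) *\<^sub>R Ha b) \<le> t * (e' * (t * C + t * C))"
    proof (rule mixed_difference_bound[OF t(1)])
      fix s :: real assume s: "s \<in> {0..t}"
      have "norm (f' (q + s *\<^sub>R a + t *\<^sub>R b) a - f' (q + s *\<^sub>R a) a - Ha ((q + s *\<^sub>R a + t *\<^sub>R b) - (q + s *\<^sub>R a)))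
        \<le> e' * (norm ((q + s *\<^sub>R a + t *\<^sub>R b) - q) + norm ((q + s *\<^sub>R a) - q))"
        by (rule linearization_difference_le[OF \<open>linear Ha\<close>]) (use near(3) s in blast)
      also have "\<dots> \<le> e' * (t * C + t * C)"
      proof -
        have "norm ((q + s *\<^sub>R a + t *\<^sub>R b) - q) \<le> t * C" "norm ((q + s *\<^sub>R a) - q) \<le> t * C"
          by (rule near(1); use s in blast)+
        then show ?thesis using e' by (intro mult_left_mono add_mono) auto
      qed
      finally show "norm (f' (q + s *\<^sub>R a + t *\<^sub>R b) a - f' (q + s *\<^sub>R a) a - t *\<^sub>R Ha b) \<le> e' * (t * C + t * C)"
        by (simp add: linear_scale[OF \<open>linear Ha\<close>])
    qed (use near(2) df in blast)
    also have "\<dots> = (e / 2) * (t * t)" using C by (simp add: e'_def field_simps)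
    finally have "norm ((1 / (t * t)) *\<^sub>R (mixed_difference f q a b t - (t * t) *\<^sub>R Ha b)) \<le> e / 2"
      using t by (simp add: divide_le_eq mult.commute)
    then show "dist ((1 / (t * t)) *\<^sub>R mixed_difference f q a b t) (Ha b) < e"
      using t e by (simp add: dist_norm scaleR_diff_right)
  qed
qed

lemma second_derivative_symmetric:
  fixes f :: "'a::real_normed_vector \<Rightarrow> 'b::real_inner"
  assumes "open V" "q \<in> V" and "\<And>r. r \<in> V \<Longrightarrow> (f has_derivative f' r) (at r)"
    and "((\<lambda>r. f' r a) has_derivative Ha) (at q)" and "((\<lambda>r. f' r b) has_derivative Hb) (at q)"
  shows "Ha b = Hb a"
  using mixed_difference_quotient_tendsto[OF assms(1-4), of b]
    mixed_difference_quotient_tendsto[OF assms(1-3,5), of a]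
  by (intro tendsto_unique[OF trivial_limit_at_right_real]) (simp_all add: mixed_difference_commute)

lemma bilinear_bil: "bilinear (bil M)"
  unfolding bilinear_def bil_def
  by (auto intro!: linearI simp: inner_add_left inner_add_right matrix_vector_right_distrib
      linear_scale[OF matrix_vector_mul_linear])

lemma bil_commute: "transpose M = M \<Longrightarrow> bil M a b = bil M b a"
  unfolding bil_def by (metis dot_lmul_matrix inner_commute transpose_matrix_vector)

lemmas bil_linear_simps = bilinear_ladd[OF bilinear_bil] bilinear_radd[OF bilinear_bil]
  bilinear_lmul[OF bilinear_bil] bilinear_rmul[OF bilinear_bil]
  bilinear_lsub[OF bilinear_bil] bilinear_rsub[OF bilinear_bil]
  bilinear_lzero[OF bilinear_bil] bilinear_rzero[OF bilinear_bil]

lemma has_derivative_bil: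
  assumes "(M has_derivative M') (at x within s)" "(A has_derivative A') (at x within s)"
    "(B has_derivative B') (at x within s)"
  shows "((\<lambda>r. bil (M r) (A r) (B r)) has_derivative
     (\<lambda>h. bil (M' h) (A x) (B x) + bil (M x) (A' h) (B x) + bil (M x) (A x) (B' h))) (at x within s)"
proof -
  have "bounded_bilinear (\<lambda>(M::real^'n^'m) v. M *v v)"
    unfolding bilinear_conv_bounded_bilinear[symmetric] bilinear_def
    by (auto intro!: linearI simp: matrix_vector_mult_add_rdistrib matrix_vector_right_distrib
        matrix_scaleR_vector_ac scaleR_matrix_vector_assoc)
  from bounded_bilinear.FDERIV[OF this assms(1,3)]
  have "((\<lambda>r. M r *v B r) has_derivative (\<lambda>h. M x *v B' h + M' h *v B x)) (at x within s)"
    by simp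
  from has_derivative_inner[OF assms(2) this] show ?thesis
    unfolding bil_def by (rule has_derivative_eq_rhs) (auto simp: inner_add_right algebra_simps)
qed

lemma dir_bil_const_args:
  assumes "g differentiable (at p)"
  shows "dir (\<lambda>x. bil (g x) Z W) p X = bil (dir g p X) Z W"
proof -
  have "((\<lambda>x. bil (g x) Z W) has_derivative (\<lambda>X. bil (dir g p X) Z W + bil (g p) 0 W + bil (g p) Z 0)) (at p)"
    by (rule has_derivative_bil[OF has_derivative_dir[OF assms] has_derivative_const has_derivative_const])
  then show ?thesis by (simp add: dir_eqI bil_linear_simps)
qed

lemma dir_inner_const_right:
  assumes "l differentiable (at p)"
  shows "dir (\<lambda>x. l x \<bullet> Z) p X = dir l p X \<bullet> Z"
proof -
  have "((\<lambda>x. l x \<bullet> Z) has_derivative (\<lambda>X. l p \<bullet> 0 + dir l p X \<bullet> Z)) (at p)"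
    by (rule has_derivative_inner[OF has_derivative_dir[OF assms] has_derivative_const])
  then show ?thesis by (simp add: dir_eqI)
qed

lemma has_derivative_linear_field_apply:
  fixes F :: "real^'m \<Rightarrow> real^'m \<Rightarrow> 'b::real_normed_vector"
  assumes V: "open V" "q \<in> V" and lin: "\<And>r. r \<in> V \<Longrightarrow> linear (F r)"
    and dF: "\<And>w. ((\<lambda>r. F r w) has_derivative DF w) (at q)"
    and dY: "(Y has_derivative DY) (at q)"
  shows "((\<lambda>r. F r (Y r)) has_derivative (\<lambda>a. F q (DY a) + DF (Y q) a)) (at q)"
proof -
  have coords: "F r w = (\<Sum>i\<in>UNIV. w$i *\<^sub>R F r (axis i 1))" if "r \<in> V" for r w
  proof -
    have "F r w = F r (\<Sum>i\<in>UNIV. w$i *\<^sub>R axis i 1)"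
      using basis_expansion[of w] by (simp add: scalar_mult_eq_scaleR)
    then show ?thesis using lin[OF that] by (simp add: linear_sum linear_scale)
  qed
  have deriv: "((\<lambda>r. F r (Z r)) has_derivative
      (\<lambda>a. F q (DZ a) + (\<Sum>i\<in>UNIV. (Z q)$i *\<^sub>R DF (axis i 1) a))) (at q)"
    if dZ: "(Z has_derivative DZ) (at q)" for Z DZ
  proof -
    have dZi: "((\<lambda>r. (Z r)$i) has_derivative (\<lambda>a. (DZ a)$i)) (at q)" for i
      using bounded_linear.has_derivative[OF bounded_linear_vec_nth dZ] .
    have "((\<lambda>r. \<Sum>i\<in>UNIV. (Z r)$i *\<^sub>R F r (axis i 1)) has_derivative
        (\<lambda>a. \<Sum>i\<in>UNIV. (Z q)$i *\<^sub>R DF (axis i 1) a + (DZ a)$i *\<^sub>R F q (axis i 1))) (at q)"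
      by (intro has_derivative_sum has_derivative_scaleR dZi dF)
    then have "((\<lambda>r. F r (Z r)) has_derivative
        (\<lambda>a. \<Sum>i\<in>UNIV. (Z q)$i *\<^sub>R DF (axis i 1) a + (DZ a)$i *\<^sub>R F q (axis i 1))) (at q)"
      by (rule has_derivative_transform_within_open[OF _ V]) (metis coords)
    moreover have "(\<Sum>i\<in>UNIV. (Z q)$i *\<^sub>R DF (axis i 1) a + (DZ a)$i *\<^sub>R F q (axis i 1))
        = F q (DZ a) + (\<Sum>i\<in>UNIV. (Z q)$i *\<^sub>R DF (axis i 1) a)" for a
      unfolding coords[OF V(2), of "DZ a"] sum.distrib by (simp add: add.commute)
    ultimately show ?thesis by simp
  qed
  have "DF (Y q) = (\<lambda>a. F q 0 + (\<Sum>i\<in>UNIV. (Y q)$i *\<^sub>R DF (axis i 1) a))"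
    using has_derivative_unique[OF dF deriv[OF has_derivative_const[of "Y q"]]] by simp
  with deriv[OF dY] show ?thesis
    using linear_0[OF lin[OF V(2)]] by simp
qed

lemma bilinear_nondegenerate_represents:
  fixes B :: "'a::euclidean_space \<Rightarrow> 'a \<Rightarrow> real"
  assumes bl: "bilinear B" and nd: "\<And>u. \<forall>v. B u v = 0 \<Longrightarrow> u = 0" and "linear \<phi>"
  shows "\<exists>!u. \<forall>v. B u v = \<phi> v"
proof -
  have linB: "linear (B u)" "linear (\<lambda>u. B u v)" for u v using bl unfolding bilinear_def by blast+
  have represent: "\<psi> v = adjoint \<psi> 1 \<bullet> v" if "linear \<psi>" for \<psi> :: "'a \<Rightarrow> real" and v
    using adjoint_works[OF that, of v 1] by (simp add: inner_commute)
  define f where "f u = adjoint (B u) 1" for u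
  have fB: "f u \<bullet> v = B u v" for u v
    unfolding f_def using represent[OF linB(1)] by simp
  have "linear f"
    by (intro linearI; rule vector_eq_rdot[THEN iffD1];
        simp add: fB inner_add_left linear_add[OF linB(2)] linear_scale[OF linB(2)])
  moreover have "inj f"
    using nd fB by (intro injI) (metis inner_diff_left linear_diff[OF linB(2)] right_minus_eq)
  ultimately obtain u where u: "f u = adjoint \<phi> 1"
    using linear_injective_imp_surjective by (metis surjD)
  show ?thesis
  proof (rule ex1I)
    show "\<forall>v. B u v = \<phi> v" using fB u represent[OF \<open>linear \<phi>\<close>] by metis
    then show "u' = u" if "\<forall>v. B u' v = \<phi> v" for u'
      using that nd[of "u' - u"] by (simp add: linear_diff[OF linB(2)])
  qed
qed

lemma nvec_represents:
  assumes "nondeg_A G L c"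
  shows "calA G L c (nvec G L c) v = snd v"
proof -
  have "bilinear (calA G L c)"
    unfolding bilinear_def calA_def
    by (auto intro!: linearI simp: bil_linear_simps inner_add_right inner_add_left algebra_simps)
  moreover have "linear (snd :: (real^'n) \<times> real \<Rightarrow> real)"
    by (auto intro: linearI)
  ultimately have "\<exists>!u. \<forall>v. calA G L c u v = snd v"
    using assms unfolding nondeg_A_def by (intro bilinear_nondegenerate_represents) blast+
  then have "\<forall>v. calA G L c (nvec G L c) v = snd v"
    unfolding nvec_def by (rule theI')
  then show ?thesis ..
qed

lemma null_nvec:
  assumes "nondeg_A G L c" and "snd (nvec G L c) = 0"
  shows "bil G (fst (nvec G L c)) Z = 0" and "L \<bullet> fst (nvec G L c) = 1"
  using nvec_represents[OF assms(1), of "(Z, 0)"] nvec_represents[OF assms(1), of "(0, 1)"] assms(2)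
  by (simp_all add: calA_def bil_linear_simps)

lemma null_radical:
  assumes nd: "nondeg_A G L c" and null: "snd (nvec G L c) = 0" and W: "\<forall>Z. bil G W Z = 0"
  shows "W = (L \<bullet> W) *\<^sub>R fst (nvec G L c)"
proof -
  have "\<forall>v. calA G L c (W - (L \<bullet> W) *\<^sub>R fst (nvec G L c), 0) v = 0"
    using W null_nvec[OF nd null]
    by (simp add: calA_def bil_linear_simps inner_diff_right)
  then have "(W - (L \<bullet> W) *\<^sub>R fst (nvec G L c), 0::real) = 0"
    using nd unfolding nondeg_A_def by blast
  then show ?thesis by (simp add: zero_prod_def)
qed

lemma symmetric_skew_eq_0:
  fixes B :: "'a::zero \<Rightarrow> 'b \<Rightarrow> real"
  assumes nd: "\<And>v. \<forall>c. B v c = 0 \<Longrightarrow> v = 0"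
    and sym: "\<And>a b. D a b = D b a" and skew: "\<And>a b c. B (D a b) c = - B (D a c) b"
  shows "D a b = 0"
proof -
  have "B (D a b) c = 0" for c
  proof -
    have "B (D a b) c = - B (D c a) b" by (simp only: skew[of a b c] sym[of a c])
    also have "\<dots> = B (D b c) a" by (simp only: skew[of c a b] sym[of c b] minus_minus)
    also have "\<dots> = - B (D a b) c" by (simp only: skew[of b c a] sym[of b a])
    finally show ?thesis by simp
  qed
  then show ?thesis using nd by blast
qed

definition transverse_parts :: "('a::real_vector \<Rightarrow> 'b::real_vector) \<Rightarrow> 'b \<Rightarrow> 'b \<Rightarrow> 'a \<times> real" where
  "transverse_parts P n w = (THE ac. w = P (fst ac) + snd ac *\<^sub>R n)"

lemma transverse_parts_unique:
  assumes "linear P" "inj P" "n \<notin> range P" and eq: "P a + c *\<^sub>R n = P a' + c' *\<^sub>R n"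
  shows "a = a' \<and> c = c'"
proof -
  have diff: "P (a - a') = (c' - c) *\<^sub>R n"
    using eq \<open>linear P\<close> by (simp add: linear_diff algebra_simps)
  have "c' = c"
  proof (rule ccontr)
    assume "c' \<noteq> c"
    then have "P ((1 / (c' - c)) *\<^sub>R (a - a')) = n"
      using diff \<open>linear P\<close> by (simp add: linear_scale)
    with \<open>n \<notin> range P\<close> show False by blast
  qed
  with diff have "P (a - a') = 0" by simp
  then have "a - a' = 0" using \<open>inj P\<close> \<open>linear P\<close> linear_injective_0 by blast
  with \<open>c' = c\<close> show ?thesis by simp
qed

lemma transverse_parts_eq:
  assumes "linear P" "inj P" "n \<notin> range P"
  shows "transverse_parts P n (P a + c *\<^sub>R n) = (a, c)"
  unfolding transverse_parts_def
proof (rule the_equality)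
  fix ac assume "P a + c *\<^sub>R n = P (fst ac) + snd ac *\<^sub>R n"
  then have "a = fst ac \<and> c = snd ac" by (rule transverse_parts_unique[OF assms])
  then show "ac = (a, c)" by (simp add: prod_eq_iff)
qed simp

lemma transverse_parts_decompose:
  assumes "linear P" "inj P" "n \<notin> range P" and "\<exists>a c. w = P a + c *\<^sub>R n"
  shows "w = P (fst (transverse_parts P n w)) + snd (transverse_parts P n w) *\<^sub>R n"
proof -
  obtain a c where "w = P a + c *\<^sub>R n" using assms(4) by blast
  then show ?thesis by (simp add: transverse_parts_eq[OF assms(1-3)])
qed

lemma complement_line_not_in_range:
  fixes P :: "real^'m \<Rightarrow> real^'n"
  assumes "CARD('n) = CARD('m) + 1" and "linear P" and span: "\<forall>w. \<exists>a c. w = P a + c *\<^sub>R n"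
  shows "n \<notin> range P"
proof
  assume "n \<in> range P"
  then obtain b where b: "P b = n" by blast
  have "range P = UNIV"
  proof (intro set_eqI iffI)
    fix w :: "real^'n"
    obtain a c where "w = P a + c *\<^sub>R n" using span by blast
    then have "w = P (a + c *\<^sub>R b)" using b \<open>linear P\<close> by (simp add: linear_add linear_scale)
    then show "w \<in> range P" by blast
  qed auto
  then have "dim (UNIV::(real^'n) set) \<le> dim (UNIV::(real^'m) set)"
    using dim_image_le[OF \<open>linear P\<close>, of UNIV] by simp
  with assms(1) show False by (simp add: dim_UNIV)
qed

lemma Ufield_commute:
  assumes "open U" "p \<in> U" "\<forall>p\<in>U. transpose (g p) = g p"
  shows "Ufield g l l2 p a b = Ufield g l l2 p b a"
proof -
  have "dir (\<lambda>x. bil (g x) a b) p = dir (\<lambda>x. bil (g x) b a) p"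
    using assms by (intro dir_cong_open[of U]) (auto intro: bil_commute)
  moreover have sym: "bil (g p) x y = bil (g p) y x" for x y using assms bil_commute by blast
  ultimately show ?thesis unfolding Ufield_def
    using sym[of "dir (nfield g l l2) p a" b] sym[of a "dir (nfield g l l2) p b"] by simp
qed

locale transverse_section =
  fixes U :: "(real^'n) set" and g :: "real^'n \<Rightarrow> real^'n^'n" and l :: "real^'n \<Rightarrow> real^'n"
    and l2 :: "real^'n \<Rightarrow> real" and Gam :: "real^'n \<Rightarrow> real^'n \<Rightarrow> real^'n \<Rightarrow> real^'n"
    and V :: "(real^'m) set" and psi :: "real^'m \<Rightarrow> real^'n"
    and Gh :: "real^'m \<Rightarrow> real^'m \<Rightarrow> real^'m \<Rightarrow> real^'m" and q :: "real^'m"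
  assumes dim: "CARD('n) = CARD('m) + 1"
    and data: "null_mhd U g l l2"
    and circ: "is_nabla_circ U g l l2 Gam"
    and emb: "transverse_embedding U g l l2 V psi"
    and lc: "is_levi_civita V (hS g psi) Gh"
    and q: "q \<in> V"
begin

abbreviation "p \<equiv> psi q"
abbreviation "P \<equiv> dir psi q"
abbreviation "np \<equiv> nfield g l l2 (psi q)"
abbreviation "h \<equiv> hS g psi q"
abbreviation "Uq \<equiv> Upar g l l2 psi q"
abbreviation "ls \<equiv> lsharp g l psi q"

lemma p_in_U: "p \<in> U"
  using emb q unfolding transverse_embedding_def by blast

lemma g_differentiable: "g differentiable (at p)" and l_differentiable: "l differentiable (at p)"
  using data p_in_U unfolding null_mhd_def by blast+

lemma np_null: "bil (g p) np Z = 0" "bil (g p) Z np = 0" "l p \<bullet> np = 1"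
  and np_radical: "\<forall>Z. bil (g p) W Z = 0 \<Longrightarrow> W = (l p \<bullet> W) *\<^sub>R np"
proof -
  have nd: "nondeg_A (g p) (l p) (l2 p)" and null: "snd (nvec (g p) (l p) (l2 p)) = 0"
    and sym: "transpose (g p) = g p"
    using data p_in_U unfolding null_mhd_def n2field_def by auto
  show "bil (g p) np Z = 0" "l p \<bullet> np = 1"
    using null_nvec[OF nd null] unfolding nfield_def by auto
  then show "bil (g p) Z np = 0" using bil_commute[OF sym] by metis
  show "\<forall>Z. bil (g p) W Z = 0 \<Longrightarrow> W = (l p \<bullet> W) *\<^sub>R np"
    using null_radical[OF nd null] unfolding nfield_def by blast
qed

lemma psi_has_derivative: "r \<in> V \<Longrightarrow> (psi has_derivative dir psi r) (at r)"
  using emb has_derivative_dir unfolding transverse_embedding_def by blast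

lemma linear_dpsi: "r \<in> V \<Longrightarrow> linear (dir psi r)"
  using psi_has_derivative has_derivative_linear by blast

lemma inj_P: "inj P" and span_P_np: "\<forall>w. \<exists>a c. w = P a + c *\<^sub>R np"
  using emb q unfolding transverse_embedding_def by blast+

lemma np_not_in_range: "np \<notin> range P"
  using complement_line_not_in_range[OF dim linear_dpsi[OF q] span_P_np] .

lemmas P_transversal = linear_dpsi[OF q] inj_P np_not_in_range

definition Hess :: "real^'m \<Rightarrow> real^'m \<Rightarrow> real^'n" where
  "Hess a b = dir (\<lambda>r. dir psi r b) q a"

lemma Hess_has_derivative: "((\<lambda>r. dir psi r b) has_derivative (\<lambda>a. Hess a b)) (at q)"
  using emb q has_derivative_dir[of "\<lambda>r. dir psi r b" q]
  unfolding transverse_embedding_def Hess_def by blast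

lemma Hess_commute: "Hess a b = Hess b a"
  using emb second_derivative_symmetric[OF _ q psi_has_derivative Hess_has_derivative Hess_has_derivative]
  unfolding transverse_embedding_def by metis

definition K :: "real^'m \<Rightarrow> real^'m \<Rightarrow> real^'n" where
  "K a b = Hess a b + Gam p (P a) (P b)"

definition GamS :: "real^'m \<Rightarrow> real^'m \<Rightarrow> real^'m" where
  "GamS a b = fst (transverse_parts P np (K a b))"

definition Om :: "real^'m \<Rightarrow> real^'m \<Rightarrow> real" where
  "Om a b = snd (transverse_parts P np (K a b))"

lemma K_decompose: "K a b = P (GamS a b) + Om a b *\<^sub>R np"
  unfolding GamS_def Om_def using transverse_parts_decompose[OF P_transversal span_P_np[rule_format]] .

lemma K_commute: "K a b = K b a"
  using circ p_in_U unfolding K_def is_nabla_circ_def by (metis Hess_commute)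

lemma GamS_commute: "GamS a b = GamS b a" and Om_commute: "Om a b = Om b a"
  unfolding GamS_def Om_def by (simp_all only: K_commute[of a b])

lemma h_eq: "h a b = bil (g p) (P a) (P b)"
  unfolding hS_def ..

lemma bilinear_h: "bilinear h"
  using linear_dpsi[OF q] unfolding bilinear_def h_eq
  by (auto intro!: linearI simp: linear_add linear_scale bil_linear_simps)

lemma h_commute: "h a b = h b a"
  using data p_in_U bil_commute unfolding null_mhd_def h_eq by metis

lemma h_nondegenerate:
  assumes "\<forall>c. h v c = 0"
  shows "v = 0"
proof -
  have "bil (g p) (P v) W = 0" for W
  proof -
    obtain a c where "W = P a + c *\<^sub>R np" using span_P_np by blast
    then show ?thesis using assms np_null(2) by (simp add: h_eq bil_linear_simps)
  qed
  then have "P v = (l p \<bullet> P v) *\<^sub>R np" using np_radical by blast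
  then have "P v = P 0 + (l p \<bullet> P v) *\<^sub>R np" using linear_0[OF linear_dpsi[OF q]] by simp
  moreover have "P v = P v + 0 *\<^sub>R np" by simp
  ultimately show "v = 0" using transverse_parts_unique[OF P_transversal] by metis
qed

lemma lsharp_represents: "h ls c = lpar l psi q c"
proof -
  have "linear (lpar l psi q)"
    using linear_dpsi[OF q] unfolding lpar_def by (auto intro!: linearI simp: linear_add linear_scale inner_add_right)
  then have "\<exists>!v. \<forall>c. h v c = lpar l psi q c"
    using bilinear_nondegenerate_represents[OF bilinear_h h_nondegenerate] by blast
  then have "\<forall>c. h ls c = lpar l psi q c" unfolding lsharp_def by (rule theI')
  then show ?thesis ..
qed

lemma Uq_commute: "Uq a b = Uq b a"
  using data unfolding Upar_def null_mhd_def by (intro Ufield_commute[OF _ p_in_U]) auto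

lemma dir_hS: "dir (\<lambda>r. hS g psi r b c) q a
    = bil (dir g p (P a)) (P b) (P c) + bil (g p) (Hess a b) (P c) + bil (g p) (P b) (Hess a c)"
proof -
  have "((\<lambda>r. g (psi r)) has_derivative (\<lambda>a. dir g p (P a))) (at q)"
    using has_derivative_compose[OF psi_has_derivative[OF q] has_derivative_dir[OF g_differentiable]] .
  from has_derivative_bil[OF this Hess_has_derivative Hess_has_derivative]
  show ?thesis unfolding hS_def by (rule dir_eqI[THEN fun_cong])
qed

lemma circ_metric:
  "bil (dir g p X) Z W - bil (g p) (Gam p X Z) W - bil (g p) Z (Gam p X W)
    = - Ufield g l l2 p X Z * (l p \<bullet> W) - Ufield g l l2 p X W * (l p \<bullet> Z)"
proof -
  have "dir (\<lambda>x. bil (g x) Z W) p X - bil (g p) (Gam p X Z) W - bil (g p) Z (Gam p X W)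
    = - Ufield g l l2 p X Z * (l p \<bullet> W) - Ufield g l l2 p X W * (l p \<bullet> Z)"
    using circ p_in_U unfolding is_nabla_circ_def by blast
  then show ?thesis by (simp only: dir_bil_const_args[OF g_differentiable])
qed

lemma circ_ell:
  "(dir l p X \<bullet> Z - l p \<bullet> Gam p X Z) + (dir l p Z \<bullet> X - l p \<bullet> Gam p Z X) = - 2 * l2 p * Ufield g l l2 p X Z"
proof -
  have "(dir (\<lambda>x. l x \<bullet> Z) p X - l p \<bullet> Gam p X Z) + (dir (\<lambda>x. l x \<bullet> X) p Z - l p \<bullet> Gam p Z X)
    = - 2 * l2 p * Ufield g l l2 p X Z"
    using circ p_in_U unfolding is_nabla_circ_def by blast
  then show ?thesis by (simp only: dir_inner_const_right[OF l_differentiable])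
qed

definition GamH :: "real^'m \<Rightarrow> real^'m \<Rightarrow> real^'m" where
  "GamH a b = GamS a b - Uq a b *\<^sub>R ls"

lemma dir_hS_eq_GamH: "dir (\<lambda>r. hS g psi r b c) q a = h (GamH a b) c + h b (GamH a c)"
proof -
  have K_left: "bil (g p) (K a b) (P c) = h (GamS a b) c"
    unfolding K_decompose h_eq by (simp add: bil_linear_simps np_null)
  have K_right: "bil (g p) (P b) (K a c) = h b (GamS a c)"
    unfolding K_decompose h_eq by (simp add: bil_linear_simps np_null)
  have GamH_left: "h (GamH a b) c = h (GamS a b) c - Uq a b * (l p \<bullet> P c)" for a b c
    unfolding GamH_def using lsharp_represents[of c]
    by (simp add: bilinear_lsub[OF bilinear_h] bilinear_lmul[OF bilinear_h] lpar_def)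
  have GamH_right: "h b (GamH a c) = h b (GamS a c) - Uq a c * (l p \<bullet> P b)"
    using GamH_left[of a c b] h_commute by metis
  show ?thesis
    using dir_hS[of b c a] circ_metric[of "P a" "P b" "P c"] K_left K_right GamH_left[of a b c] GamH_right
    unfolding K_def Upar_def by (simp add: bil_linear_simps algebra_simps)
qed

lemma Gh_eq_GamH: "Gh q a b = GamH a b"
proof -
  define D where "D a b = GamH a b - Gh q a b" for a b
  have Gh_commute: "Gh q a b = Gh q b a" for a b
    using lc q unfolding is_levi_civita_def by blast
  have sym: "D a b = D b a" for a b
    unfolding D_def GamH_def by (simp add: GamS_commute[of a b] Uq_commute[of a b] Gh_commute[of a b])
  have skew: "h (D a b) c = - h (D a c) b" for a b c
  proof -
    have "dir (\<lambda>r. hS g psi r b c) q a - h (Gh q a b) c - h b (Gh q a c) = 0"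
      using lc q unfolding is_levi_civita_def by blast
    then show ?thesis
      unfolding D_def dir_hS_eq_GamH
      by (simp add: bilinear_lsub[OF bilinear_h] bilinear_rsub[OF bilinear_h] h_commute[of b])
  qed
  have "D a b = 0"
    by (rule symmetric_skew_eq_0[where B = h]) (fact h_nondegenerate sym skew)+
  then show ?thesis unfolding D_def by simp
qed

lemma nablaN_eq:
  assumes "Y differentiable (at q)"
  shows "nablaN Gam psi X Y q = P (dir Y q (X q)) + K (X q) (Y q)"
proof -
  have "open V" using emb unfolding transverse_embedding_def by blast
  from has_derivative_linear_field_apply[OF this q linear_dpsi Hess_has_derivative has_derivative_dir[OF assms]]
  have "dir (\<lambda>r. dir psi r (Y r)) q = (\<lambda>a. P (dir Y q a) + Hess a (Y q))"
    by (rule dir_eqI)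
  then show ?thesis unfolding nablaN_def K_def by (simp add: add.assoc)
qed

lemma decomp_eq:
  assumes "Y differentiable (at q)"
  shows "decomp g l l2 Gam psi X Y q = (dir Y q (X q) + GamS (X q) (Y q), Om (X q) (Y q))"
proof -
  have "nablaN Gam psi X Y q = P (dir Y q (X q) + GamS (X q) (Y q)) + Om (X q) (Y q) *\<^sub>R np"
    using nablaN_eq[OF assms] K_decompose linear_dpsi[OF q] by (simp add: linear_add add.assoc)
  then show ?thesis
    unfolding decomp_def transverse_parts_def[symmetric] by (simp add: transverse_parts_eq[OF P_transversal])
qed

lemma cov_lpar_eq: "cov_lpar Gh l psi q a b = dir l p (P a) \<bullet> P b + l p \<bullet> Hess a b - lpar l psi q (GamH a b)"
proof -
  have "((\<lambda>r. l (psi r)) has_derivative (\<lambda>a. dir l p (P a))) (at q)"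
    using has_derivative_compose[OF psi_has_derivative[OF q] has_derivative_dir[OF l_differentiable]] .
  from has_derivative_inner[OF this Hess_has_derivative]
  have "dir (\<lambda>r. lpar l psi r b) q a = l p \<bullet> Hess a b + dir l p (P a) \<bullet> P b"
    unfolding lpar_def by (rule dir_eqI[THEN fun_cong])
  then show ?thesis unfolding cov_lpar_def Gh_eq_GamH by simp
qed

lemma Om_eq:
  "Om a b = (1/2) * (cov_lpar Gh l psi q a b + cov_lpar Gh l psi q b a)
    + (l2 p - l2par g l psi q) * Uq a b"
proof -
  have lpar_GamH: "lpar l psi q (GamH a b) = lpar l psi q (GamS a b) - Uq a b * l2par g l psi q" for a b
    unfolding GamH_def l2par_def lpar_def using linear_dpsi[OF q] by (simp add: linear_diff linear_scale inner_diff_right)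
  have lp_K: "l p \<bullet> K a b = lpar l psi q (GamS a b) + Om a b" for a b
    unfolding K_decompose lpar_def by (simp add: inner_add_right np_null(3))
  show ?thesis
    using cov_lpar_eq[of a b] cov_lpar_eq[of b a] lpar_GamH[of a b] lpar_GamH[of b a] lp_K[of a b] lp_K[of b a]
      circ_ell[of "P a" "P b"] GamS_commute[of a b] Om_commute[of a b] Uq_commute[of a b]
    unfolding K_def Upar_def by (simp add: inner_add_right algebra_simps)
qed

end

theorem lemma3p14:
  fixes U :: "(real^'n) set" and g :: "real^'n \<Rightarrow> real^'n^'n" and l :: "real^'n \<Rightarrow> real^'n"
    and l2 :: "real^'n \<Rightarrow> real" and Gam :: "real^'n \<Rightarrow> real^'n \<Rightarrow> real^'n \<Rightarrow> real^'n"
    and V :: "(real^'m) set" and psi :: "real^'m \<Rightarrow> real^'n"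
    and Gh :: "real^'m \<Rightarrow> real^'m \<Rightarrow> real^'m \<Rightarrow> real^'m"
    and X Y :: "real^'m \<Rightarrow> real^'m" and q :: "real^'m"
  assumes dim: "CARD('n) = CARD('m) + 1"
    and data: "null_mhd U g l l2"
    and circ: "is_nabla_circ U g l l2 Gam"
    and emb: "transverse_embedding U g l l2 V psi"
    and lc: "is_levi_civita V (hS g psi) Gh"
    and XY: "\<forall>r\<in>V. X differentiable (at r) \<and> Y differentiable (at r)"
    and q: "q \<in> V"
  shows "(nablah Gh X Y q = nablaS g l l2 Gam psi X Y q
            - Upar g l l2 psi q (X q) (Y q) *\<^sub>R lsharp g l psi q)
         \<and> (nablaN Gam psi X Y q = dir psi q (nablah Gh X Y q + Upar g l l2 psi q (X q) (Y q) *\<^sub>R lsharp g l psi q)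
            + Omega g l l2 Gam psi X Y q *\<^sub>R nfield g l l2 (psi q))
         \<and> (Omega g l l2 Gam psi X Y q
           = (1/2) * (cov_lpar Gh l psi q (X q) (Y q) + cov_lpar Gh l psi q (Y q) (X q))
             + (l2 (psi q) - l2par g l psi q) * Upar g l l2 psi q (X q) (Y q))"
proof -
  interpret transverse_section U g l l2 Gam V psi Gh q
    using dim data circ emb lc q by unfold_locales
  have Y: "Y differentiable (at q)" using XY q by blast
  have nablaS: "nablaS g l l2 Gam psi X Y q = dir Y q (X q) + GamS (X q) (Y q)"
    and Omega: "Omega g l l2 Gam psi X Y q = Om (X q) (Y q)"
    unfolding nablaS_def Omega_def decomp_eq[OF Y] by simp_all
  have nablah: "nablah Gh X Y q = nablaS g l l2 Gam psi X Y q - Uq (X q) (Y q) *\<^sub>R ls"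
    unfolding nablah_def nablaS Gh_eq_GamH GamH_def by simp
  moreover have "nablaN Gam psi X Y q = P (nablah Gh X Y q + Uq (X q) (Y q) *\<^sub>R ls) + Omega g l l2 Gam psi X Y q *\<^sub>R np"
    unfolding nablah nablaS Omega nablaN_eq[OF Y] K_decompose using linear_dpsi[OF q] by (simp add: linear_add)
  ultimately show ?thesis
    using Om_eq[of "X q" "Y q"] unfolding Omega by simp
qed

end
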